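(* Let $M < N$ be positive integers. Define $\gamma_{N,M} : (\mathbb{R}^N \setminus \{\mathbf{0}\})^M \to \mathbb{R}^{N\times M}$ as follows: for nonzero $v^{(1)}, \dots, v^{(M)} \in \mathbb{R}^N$ let $U = \begin{bmatrix} v^{(1)}/\|v^{(1)}\|_2 & \cdots & v^{(M)}/\|v^{(M)}\|_2 \end{bmatrix} \in \mathbb{R}^{N\times M}$, let $U_1 \in \mathbb{R}^{M\times M}$ be the submatrix formed by the first $M$ rows of $U$, let $S = \tfrac12 I + \mathrm{striu}(U^\top U)$, and set $$\gamma_{N,M}(v^{(1)}, \dots, v^{(M)}) = \begin{bmatrix} I_M \\ \mathbf{0} \end{bmatrix} - U S^{-1} U_1^\top \in \mathbb{R}^{N\times M},$$ where $\begin{bmatrix} I_M \\ \mathbf{0}\end{bmatrix}\in\mathbb{R}^{N\times M}$ consists of the $M\times M$ identity on top of an $(N-M)\times M$ zero block. Then $S$ is always invertible, $\gamma_{N,M}$ takes values in the Stiefel manifold $\mathrm{St}(N,M)$, and $\gamma_{N,M}$ is surjective onto $\mathrm{St}(N,M)$.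
   Context: $\mathrm{St}(N,M) = \{\Omega \in \mathbb{R}^{N\times M} : \Omega^\top \Omega = I_M\}$. For a square matrix $X$, $\mathrm{striu}(X)$ denotes the strictly upper-triangular part of $X$ (all diagonal and below-diagonal entries set to zero). *)

theory Defs
  imports "Jordan_Normal_Form.Matrix"
begin

text \<open>Matrices are Jordan_Normal_Form matrices (dimensions are values).
  An M-tuple of vectors in R^N is a function v :: nat => real vec, of which
  only the entries v 0, ..., v (M-1) are relevant.\<close>

definition stiefel :: "nat \<Rightarrow> nat \<Rightarrow> real mat set" where
  "stiefel N M = {\<Omega> \<in> carrier_mat N M. transpose_mat \<Omega> * \<Omega> = 1\<^sub>m M}"

definition striu :: "real mat \<Rightarrow> real mat" where
  "striu X = mat (dim_row X) (dim_col X) (\<lambda>(i,j). if i < j then X $$ (i,j) else 0)"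

definition inv_mat :: "real mat \<Rightarrow> real mat" where
  "inv_mat A = (SOME B. B \<in> carrier_mat (dim_row A) (dim_row A) \<and> inverts_mat A B \<and> inverts_mat B A)"

definition vnorm :: "real vec \<Rightarrow> real" where
  "vnorm x = sqrt (x \<bullet> x)"

definition valid_tuple :: "nat \<Rightarrow> nat \<Rightarrow> (nat \<Rightarrow> real vec) \<Rightarrow> bool" where
  "valid_tuple N M v \<longleftrightarrow> (\<forall>j<M. v j \<in> carrier_vec N \<and> v j \<noteq> 0\<^sub>v N)"

definition Umat :: "nat \<Rightarrow> nat \<Rightarrow> (nat \<Rightarrow> real vec) \<Rightarrow> real mat" where
  "Umat N M v = mat N M (\<lambda>(i,j). (v j $ i) / vnorm (v j))"

definition U1mat :: "nat \<Rightarrow> nat \<Rightarrow> (nat \<Rightarrow> real vec) \<Rightarrow> real mat" where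
  "U1mat N M v = mat M M (\<lambda>(i,j). Umat N M v $$ (i,j))"

definition Smat :: "nat \<Rightarrow> nat \<Rightarrow> (nat \<Rightarrow> real vec) \<Rightarrow> real mat" where
  "Smat N M v = (1/2) \<cdot>\<^sub>m 1\<^sub>m M + striu (transpose_mat (Umat N M v) * Umat N M v)"

definition gamma :: "nat \<Rightarrow> nat \<Rightarrow> (nat \<Rightarrow> real vec) \<Rightarrow> real mat" where
  "gamma N M v = (1\<^sub>m M @\<^sub>r 0\<^sub>m (N - M) M)
     - Umat N M v * inv_mat (Smat N M v) * transpose_mat (U1mat N M v)"

end

theory Submission
  imports Defs "Jordan_Normal_Form.Determinant"
begin

text \<open>Write \<open>u\<^sub>j = v\<^sup>(\<^sup>j\<^sup>) / \<parallel>v\<^sup>(\<^sup>j\<^sup>)\<parallel>\<close> and \<open>H\<^sub>j = I - 2 u\<^sub>j u\<^sub>j\<^sup>T\<close>. The product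
  \<open>Q = H\<^sub>0 \<cdots> H\<^sub>M\<^sub>-\<^sub>1\<close> of these Householder reflections has the compact WY form
  \<open>Q = I - U Y\<close> where \<open>Y\<close> solves the triangular system \<open>S Y = U\<^sup>T\<close>; hence
  \<open>\<gamma>(v) = [I; 0] - U S\<^sup>-\<^sup>1 U\<^sub>1\<^sup>T\<close> consists of the first \<open>M\<close> columns of the orthogonal
  matrix \<open>Q\<close>, and \<open>S\<close> is invertible simply because it is unit upper triangular up to the
  factor \<open>\<onehalf>\<close>. Conversely, Householder QR factorises any \<open>\<Omega>\<close> in the Stiefel manifold: if
  \<open>Q\<^sub>m = H\<^sub>0 \<cdots> H\<^sub>m\<^sub>-\<^sub>1\<close> already has the first \<open>m\<close> columns of \<open>\<Omega>\<close>, then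
  \<open>x = Q\<^sub>m\<^sup>T \<omega>\<^sub>m\<close> is a unit vector vanishing in its first \<open>m\<close> coordinates, and a
  reflection fixing \<open>e\<^sub>0, \<dots>, e\<^sub>m\<^sub>-\<^sub>1\<close> and sending \<open>e\<^sub>m\<close> to \<open>x\<close> extends the
  agreement to \<open>m + 1\<close> columns. The hypothesis \<open>M < N\<close> leaves room for that reflection
  when \<open>x = e\<^sub>m\<close>.\<close>

section \<open>Householder reflections\<close>

definition householder :: "nat \<Rightarrow> real vec \<Rightarrow> real mat" where
  "householder N w = mat N N (\<lambda>(a,b). (if a = b then 1 else 0) - 2 * (w$a) * (w$b))"

definition unit_vector :: "nat \<Rightarrow> real vec \<Rightarrow> bool" where
  "unit_vector N w \<longleftrightarrow> w \<in> carrier_vec N \<and> w \<bullet> w = 1"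

lemma unit_vector_sum: "unit_vector N w \<Longrightarrow> (\<Sum>c<N. w $ c * w $ c) = 1"
  by (auto simp: unit_vector_def scalar_prod_def lessThan_atLeast0)

lemma unit_vector_nonzero: "unit_vector N w \<Longrightarrow> w \<noteq> 0\<^sub>v N"
  by (auto simp: unit_vector_def)

lemma householder_carrier[simp]: "householder N w \<in> carrier_mat N N"
  by (simp add: householder_def)

lemma householder_dim[simp]: "dim_row (householder N w) = N" "dim_col (householder N w) = N"
  by (simp_all add: householder_def)

lemma transpose_householder[simp]: "transpose_mat (householder N w) = householder N w"
  by (rule eq_matI) (auto simp: householder_def)

lemma householder_involutive:
  assumes "unit_vector N w"
  shows "householder N w * householder N w = 1\<^sub>m N"
proof (rule eq_matI)
  fix a b assume "a < dim_row (1\<^sub>m N :: real mat)" "b < dim_col (1\<^sub>m N :: real mat)"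
  then have a: "a < N" and b: "b < N" by auto
  have "(householder N w * householder N w) $$ (a,b)
      = (\<Sum>c<N. ((if a = c then 1 else 0) - 2 * w$a * w$c) * ((if c = b then 1 else 0) - 2 * w$c * w$b))"
    using a b by (simp add: householder_def scalar_prod_def lessThan_atLeast0)
  also have "\<dots> = (\<Sum>c<N. (if c = a then (if c = b then 1 else 0) else 0)
       - (if c = a then 2 * w$c * w$b else 0) - (if c = b then 2 * w$a * w$c else 0)
       + 4 * w$a * w$b * (w$c * w$c))"
    by (intro sum.cong) (auto simp: algebra_simps)
  also have "\<dots> = (if a = b then 1 else 0) - 4 * w$a * w$b + 4 * w$a * w$b * (\<Sum>c<N. w$c * w$c)"
    using a b by (simp add: sum.distrib sum_subtractf sum_distrib_left)
  also have "\<dots> = 1\<^sub>m N $$ (a,b)"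
    using assms a b by (simp add: unit_vector_sum)
  finally show "(householder N w * householder N w) $$ (a,b) = 1\<^sub>m N $$ (a,b)" .
qed (auto simp: householder_def)

text \<open>Reflect along \<open>x - e\<^sub>m\<close>; if \<open>x = e\<^sub>m\<close>, along \<open>e\<^sub>N\<^sub>-\<^sub>1\<close> instead, which is
  orthogonal to \<open>e\<^sub>0, \<dots>, e\<^sub>m\<close> because \<open>m + 1 < N\<close>.\<close>

lemma householder_maps_unit_vec:
  assumes x: "unit_vector N x" and mN: "Suc m < N" and x0: "\<And>i. i < m \<Longrightarrow> x $ i = 0"
  shows "\<exists>w. unit_vector N w \<and> (\<forall>c<N. \<forall>k\<le>m.
           householder N w $$ (c,k) = (if k < m then (if c = k then 1 else 0) else x $ c))"
proof (cases "\<forall>c<N. x $ c = (if c = m then 1 else 0)")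
  case True
  let ?w = "unit_vec N (N - 1) :: real vec"
  have "unit_vector N ?w"
    using mN by (simp add: unit_vector_def)
  moreover have "householder N ?w $$ (c,k) = (if k < m then (if c = k then 1 else 0) else x $ c)"
    if "c < N" "k \<le> m" for c k
    using that True mN by (auto simp: householder_def unit_vec_def)
  ultimately show ?thesis by blast
next
  case False
  define D where "D = (\<Sum>c<N. (x $ c - (if c = m then 1 else 0))\<^sup>2)"
  have D_eq: "D = 2 - 2 * x $ m"
  proof -
    have "D = (\<Sum>c<N. x $ c * x $ c) - (\<Sum>c<N. if c = m then 2 * x $ c else 0)
        + (\<Sum>c<N. if c = m then 1 else 0)"
      unfolding D_def sum_subtractf[symmetric] sum.distrib[symmetric]
      by (intro sum.cong) (auto simp: power2_eq_square algebra_simps)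
    then show ?thesis
      using mN unit_vector_sum[OF x] by simp
  qed
  have D_pos: "D > 0"
  proof -
    from False obtain c where "c < N" "x $ c \<noteq> (if c = m then 1 else 0)" by blast
    then show ?thesis
      unfolding D_def by (intro sum_pos2[of "{..<N}" c]) auto
  qed
  define w where "w = vec N (\<lambda>c. (x $ c - (if c = m then 1 else 0)) / sqrt D)"
  have "unit_vector N w"
  proof -
    have "w \<bullet> w = D / (sqrt D * sqrt D)"
      unfolding D_def w_def
      by (simp add: scalar_prod_def lessThan_atLeast0 sum_divide_distrib power2_eq_square)
    then show ?thesis
      using D_pos by (simp add: unit_vector_def w_def)
  qed
  moreover have "householder N w $$ (c,k) = (if k < m then (if c = k then 1 else 0) else x $ c)"
    if c: "c < N" and k: "k \<le> m" for c k
  proof (cases "k < m")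
    case True
    then show ?thesis
      using c mN x0[OF True] by (simp add: householder_def w_def)
  next
    case False
    then have "k = m" using k by simp
    have "householder N w $$ (c,m) = (if c = m then 1 else 0)
        - 2 * (x $ c - (if c = m then 1 else 0)) * (x $ m - 1) / (sqrt D * sqrt D)"
      using c mN by (simp add: householder_def w_def)
    also have "\<dots> = x $ c"
      using D_pos by (simp add: field_simps D_eq)
    finally show ?thesis
      using \<open>k = m\<close> by simp
  qed
  ultimately show ?thesis by blast
qed

fun householder_prod :: "nat \<Rightarrow> (nat \<Rightarrow> real vec) \<Rightarrow> nat \<Rightarrow> real mat" where
  "householder_prod N u 0 = 1\<^sub>m N"
| "householder_prod N u (Suc m) = householder_prod N u m * householder N (u m)"

lemma householder_prod_carrier[simp]: "householder_prod N u m \<in> carrier_mat N N"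
  by (induction m) auto

lemma householder_prod_dim[simp]:
  "dim_row (householder_prod N u m) = N" "dim_col (householder_prod N u m) = N"
  using householder_prod_carrier carrier_matD by blast+

lemma householder_prod_cong:
  "(\<And>j. j < m \<Longrightarrow> u j = u' j) \<Longrightarrow> householder_prod N u m = householder_prod N u' m"
  by (induction m) auto

lemma transpose_householder_prod_mult:
  assumes "\<And>j. j < m \<Longrightarrow> unit_vector N (u j)"
  shows "transpose_mat (householder_prod N u m) * householder_prod N u m = 1\<^sub>m N"
  using assms
proof (induction m)
  case (Suc m)
  let ?Q = "householder_prod N u m" and ?H = "householder N (u m)"
  have Q: "?Q \<in> carrier_mat N N" and H: "?H \<in> carrier_mat N N" and Qt: "transpose_mat ?Q \<in> carrier_mat N N"
    by auto
  have "transpose_mat (?Q * ?H) * (?Q * ?H) = ?H * ((transpose_mat ?Q * ?Q) * ?H)"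
    by (simp add: transpose_mult[OF Q H] assoc_mult_mat[OF H Qt mult_carrier_mat[OF Q H]] assoc_mult_mat[OF Qt Q H])
  also have "\<dots> = 1\<^sub>m N"
    using Suc householder_involutive[of N "u m"] by (simp add: left_mult_one_mat[OF H])
  finally show ?case by simp
qed simp

lemma householder_prod_mult_transpose:
  assumes "\<And>j. j < m \<Longrightarrow> unit_vector N (u j)"
  shows "householder_prod N u m * transpose_mat (householder_prod N u m) = 1\<^sub>m N"
  using mat_mult_left_right_inverse[OF _ _ transpose_householder_prod_mult[OF assms]] by simp

section \<open>The compact WY representation\<close>

text \<open>With \<open>Y\<^sub>m = (wy_coeff N u m j b)\<^sub>j\<^sub><\<^sub>m\<^sub>, \<^sub>b\<^sub><\<^sub>N\<close> and \<open>U\<^sub>m = [u\<^sub>0 \<dots> u\<^sub>m\<^sub>-\<^sub>1]\<close> the product of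
  reflections is \<open>I - U\<^sub>m Y\<^sub>m\<close>; the recursion is read off from
  \<open>(I - U\<^sub>m Y\<^sub>m)(I - 2 u\<^sub>m u\<^sub>m\<^sup>T) = I - U\<^sub>m (Y\<^sub>m - 2 Y\<^sub>m u\<^sub>m u\<^sub>m\<^sup>T) - 2 u\<^sub>m u\<^sub>m\<^sup>T\<close>.\<close>

fun wy_coeff :: "nat \<Rightarrow> (nat \<Rightarrow> real vec) \<Rightarrow> nat \<Rightarrow> nat \<Rightarrow> nat \<Rightarrow> real" where
  "wy_coeff N u 0 j b = 0"
| "wy_coeff N u (Suc m) j b =
     (if j < m then wy_coeff N u m j b - 2 * (\<Sum>c<N. wy_coeff N u m j c * u m $ c) * u m $ b
      else 2 * u m $ b)"

lemma householder_prod_wy: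
  assumes "a < N" "b < N"
  shows "householder_prod N u m $$ (a,b) = (if a = b then 1 else 0) - (\<Sum>j<m. u j $ a * wy_coeff N u m j b)"
  using assms
proof (induction m arbitrary: b)
  case (Suc m)
  let ?w = "u m"
  let ?UY = "\<lambda>c. \<Sum>j<m. u j $ a * wy_coeff N u m j c"
  have "householder_prod N u (Suc m) $$ (a,b)
      = (\<Sum>c<N. householder_prod N u m $$ (a,c) * householder N ?w $$ (c,b))"
    using Suc.prems by (simp add: scalar_prod_def householder_def lessThan_atLeast0)
  also have "\<dots> = (\<Sum>c<N. ((if a = c then 1 else 0) - ?UY c) * ((if c = b then 1 else 0) - 2 * ?w$c * ?w$b))"
    using Suc by (intro sum.cong) (auto simp: householder_def)
  also have "\<dots> = (\<Sum>c<N. (if c = a then (if c = b then 1 else 0) else 0))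
       - (\<Sum>c<N. (if c = a then 2 * ?w$c * ?w$b else 0)) - (\<Sum>c<N. (if c = b then ?UY c else 0))
       + (\<Sum>c<N. ?UY c * (2 * ?w$c * ?w$b))"
    unfolding sum_subtractf[symmetric] sum.distrib[symmetric]
    by (intro sum.cong) (auto simp: algebra_simps)
  also have "(\<Sum>c<N. ?UY c * (2 * ?w$c * ?w$b))
      = 2 * (\<Sum>j<m. u j $ a * (\<Sum>c<N. wy_coeff N u m j c * ?w $ c)) * ?w$b"
    by (simp add: sum_distrib_left sum_distrib_right sum.swap[of _ "{..<N}" "{..<m}"] algebra_simps)
  also have "(\<Sum>c<N. (if c = a then (if c = b then 1 else 0) else 0))
       - (\<Sum>c<N. (if c = a then 2 * ?w$c * ?w$b else 0)) - (\<Sum>c<N. (if c = b then ?UY c else 0))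
       + 2 * (\<Sum>j<m. u j $ a * (\<Sum>c<N. wy_coeff N u m j c * ?w $ c)) * ?w$b
      = (if a = b then 1 else 0) - (\<Sum>j<Suc m. u j $ a * wy_coeff N u (Suc m) j b)"
    using Suc.prems
    by (simp add: algebra_simps sum.distrib sum_subtractf sum_distrib_left sum_distrib_right)
  finally show ?case .
qed simp

text \<open>This is \<open>S\<^sub>m Y\<^sub>m = U\<^sub>m\<^sup>T\<close> for \<open>S\<^sub>m = \<onehalf> I + striu (U\<^sub>m\<^sup>T U\<^sub>m)\<close>, read row by row.\<close>

lemma wy_coeff_triangular_system:
  assumes "j < m"
  shows "(1/2) * wy_coeff N u m j b + (\<Sum>l\<in>{j<..<m}. (\<Sum>c<N. u j $ c * u l $ c) * wy_coeff N u m l b)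
    = u j $ b"
  using assms
proof (induction m arbitrary: j b)
  case (Suc m)
  let ?w = "u m"
  let ?g = "\<lambda>l. \<Sum>c<N. u j $ c * u l $ c"
  let ?W = "\<lambda>l. \<Sum>c<N. wy_coeff N u m l c * ?w $ c"
  show ?case
  proof (cases "j = m")
    case True
    then have "{j<..<Suc m} = {}" by auto
    with True show ?thesis by simp
  next
    case False
    with Suc.prems have jm: "j < m" by simp
    have IH: "(1/2) * wy_coeff N u m j c + (\<Sum>l\<in>{j<..<m}. ?g l * wy_coeff N u m l c) = u j $ c" for c
      using Suc.IH[OF jm] .
    have "{j<..<Suc m} = insert m {j<..<m}"
      using jm by auto
    then have split: "(\<Sum>l\<in>{j<..<Suc m}. ?g l * wy_coeff N u (Suc m) l b)
       = ?g m * (2 * ?w $ b) + (\<Sum>l\<in>{j<..<m}. ?g l * wy_coeff N u m l b)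
         - 2 * ?w $ b * (\<Sum>l\<in>{j<..<m}. ?g l * ?W l)"
      by (simp add: algebra_simps sum_subtractf sum_distrib_left)
    have "?W j + 2 * (\<Sum>l\<in>{j<..<m}. ?g l * ?W l)
       = (\<Sum>c<N. 2 * ((1/2) * wy_coeff N u m j c + (\<Sum>l\<in>{j<..<m}. ?g l * wy_coeff N u m l c)) * ?w $ c)"
      by (simp add: algebra_simps sum.distrib sum_distrib_left sum_distrib_right
          sum.swap[of _ "{j<..<m}" "{..<N}"])
    also have "\<dots> = 2 * ?g m"
      unfolding IH by (simp add: sum_distrib_left algebra_simps)
    finally have W: "?W j + 2 * (\<Sum>l\<in>{j<..<m}. ?g l * ?W l) = 2 * ?g m" .
    have "(1/2) * wy_coeff N u (Suc m) j b + (\<Sum>l\<in>{j<..<Suc m}. ?g l * wy_coeff N u (Suc m) l b)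
      = ((1/2) * wy_coeff N u m j b + (\<Sum>l\<in>{j<..<m}. ?g l * wy_coeff N u m l b))
        + ?w $ b * (2 * ?g m - (?W j + 2 * (\<Sum>l\<in>{j<..<m}. ?g l * ?W l)))"
      unfolding split using jm by (simp add: algebra_simps)
    then show ?thesis
      using IH[of b] W by simp
  qed
qed simp

lemma inv_mat_left_inverse:
  assumes A: "A \<in> carrier_mat n n" and "det A \<noteq> 0"
  shows "invertible_mat A" "inv_mat A \<in> carrier_mat n n" "inv_mat A * A = 1\<^sub>m n"
proof -
  have "A \<in> Units (ring_mat TYPE(real) n n)"
    by (rule det_non_zero_imp_unit[OF assms])
  then obtain B where B: "B \<in> carrier_mat n n" "A * B = 1\<^sub>m n" "B * A = 1\<^sub>m n"
    unfolding Units_def ring_mat_def by auto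
  then have "\<exists>B. B \<in> carrier_mat (dim_row A) (dim_row A) \<and> inverts_mat A B \<and> inverts_mat B A"
    using A by (auto simp: inverts_mat_def)
  from someI_ex[OF this] show "inv_mat A \<in> carrier_mat n n" "inv_mat A * A = 1\<^sub>m n"
    unfolding inv_mat_def inverts_mat_def using A by auto
  show "invertible_mat A"
    using A B unfolding invertible_mat_def inverts_mat_def by auto
qed

definition normalized :: "nat \<Rightarrow> (nat \<Rightarrow> real vec) \<Rightarrow> nat \<Rightarrow> real vec" where
  "normalized N v j = vec N (\<lambda>i. v j $ i / vnorm (v j))"

lemma normalized_unit_vector:
  assumes v: "v j \<in> carrier_vec N" "v j \<noteq> 0\<^sub>v N"
  shows "unit_vector N (normalized N v j)"
proof -
  have sum_sq: "v j \<bullet> v j = (\<Sum>c<N. v j $ c * v j $ c)"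
    using v by (simp add: scalar_prod_def lessThan_atLeast0)
  obtain c where c: "c < N" "v j $ c \<noteq> 0"
    using v by (metis eq_vecI carrier_vecD index_zero_vec)
  have "v j \<bullet> v j > 0"
    unfolding sum_sq by (rule sum_pos2[of "{..<N}" c]) (use c in \<open>auto simp: zero_less_mult_iff\<close>)
  then have "vnorm (v j) * vnorm (v j) = v j \<bullet> v j"
    by (simp add: vnorm_def)
  moreover have "normalized N v j \<bullet> normalized N v j = (v j \<bullet> v j) / (vnorm (v j) * vnorm (v j))"
    unfolding sum_sq by (simp add: normalized_def scalar_prod_def lessThan_atLeast0 sum_divide_distrib)
  ultimately show ?thesis
    using \<open>v j \<bullet> v j > 0\<close> by (simp add: unit_vector_def normalized_def)
qed

lemma normalized_unit_vector_eq:
  assumes "unit_vector N (v j)"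
  shows "normalized N v j = v j"
proof -
  have "vnorm (v j) = 1"
    using assms by (simp add: unit_vector_def vnorm_def)
  then show ?thesis
    using assms by (intro eq_vecI) (auto simp: normalized_def unit_vector_def)
qed

lemma Umat_carrier[simp]: "Umat N M v \<in> carrier_mat N M"
  by (simp add: Umat_def)

lemma U1mat_carrier[simp]: "U1mat N M v \<in> carrier_mat M M"
  by (simp add: U1mat_def)

lemma Smat_carrier[simp]: "Smat N M v \<in> carrier_mat M M"
  by (simp add: Smat_def striu_def Umat_def)

lemma Smat_dim[simp]: "dim_row (Smat N M v) = M" "dim_col (Smat N M v) = M"
  using Smat_carrier carrier_matD by blast+

lemma index_Smat:
  assumes "i < M" "j < M"
  shows "Smat N M v $$ (i,j) = (if i = j then 1/2 else 0)
     + (if i < j then (\<Sum>c<N. normalized N v i $ c * normalized N v j $ c) else 0)"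
  using assms by (simp add: Smat_def striu_def Umat_def normalized_def scalar_prod_def lessThan_atLeast0)

lemma det_Smat: "det (Smat N M v) = (1/2) ^ M"
proof -
  have "upper_triangular (Smat N M v)"
    unfolding upper_triangular_def by (auto simp: index_Smat)
  then have "det (Smat N M v) = prod_list (diag_mat (Smat N M v))"
    using det_upper_triangular Smat_carrier by blast
  also have "diag_mat (Smat N M v) = replicate M (1/2)"
    by (intro nth_equalityI) (auto simp: diag_mat_def index_Smat)
  finally show ?thesis by simp
qed

lemma Smat_mult_wy_coeff:
  assumes "M \<le> N"
  shows "Smat N M v * mat M M (\<lambda>(j,k). wy_coeff N (normalized N v) M j k) = transpose_mat (U1mat N M v)"
proof (rule eq_matI)
  let ?u = "normalized N v"
  let ?Y = "wy_coeff N ?u M"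
  fix j k assume "j < dim_row (transpose_mat (U1mat N M v))" "k < dim_col (transpose_mat (U1mat N M v))"
  then have j: "j < M" and k: "k < M" by (auto simp: U1mat_def)
  have "(Smat N M v * mat M M (\<lambda>(j,k). ?Y j k)) $$ (j,k) = (\<Sum>l<M. Smat N M v $$ (j,l) * ?Y l k)"
    using j k by (simp add: scalar_prod_def lessThan_atLeast0)
  also have "\<dots> = (\<Sum>l<M. (if l = j then (1/2) * ?Y j k else 0)
       + (if l \<in> {j<..<M} then (\<Sum>c<N. ?u j $ c * ?u l $ c) * ?Y l k else 0))"
    using j by (intro sum.cong) (auto simp: index_Smat)
  also have "\<dots> = (1/2) * ?Y j k + (\<Sum>l\<in>{j<..<M}. (\<Sum>c<N. ?u j $ c * ?u l $ c) * ?Y l k)"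
    using j by (simp add: sum.distrib sum.If_cases Int_absorb1 subset_eq Int_def greaterThanLessThan_def
        greaterThan_def lessThan_def conj_commute)
  also have "\<dots> = ?u j $ k"
    by (rule wy_coeff_triangular_system[OF j])
  also have "\<dots> = transpose_mat (U1mat N M v) $$ (j,k)"
    using j k assms by (simp add: U1mat_def Umat_def normalized_def)
  finally show "(Smat N M v * mat M M (\<lambda>(j,k). ?Y j k)) $$ (j,k) = transpose_mat (U1mat N M v) $$ (j,k)" .
qed (auto simp: U1mat_def)

lemma gamma_eq_leading_columns:
  assumes MN: "M \<le> N"
  shows "gamma N M v = mat N M (\<lambda>(a,k). householder_prod N (normalized N v) M $$ (a,k))"
proof -
  let ?u = "normalized N v"
  let ?Y = "mat M M (\<lambda>(j,k). wy_coeff N ?u M j k)"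
  let ?S = "Smat N M v"
  have T: "inv_mat ?S \<in> carrier_mat M M" "inv_mat ?S * ?S = 1\<^sub>m M"
    using inv_mat_left_inverse[OF Smat_carrier] by (auto simp: det_Smat)
  have Y: "?Y \<in> carrier_mat M M" by simp
  have "Umat N M v * inv_mat ?S * transpose_mat (U1mat N M v) = Umat N M v * (inv_mat ?S * (?S * ?Y))"
    using assoc_mult_mat[OF Umat_carrier T(1), of "transpose_mat (U1mat N M v)" M]
    by (simp add: Smat_mult_wy_coeff[OF MN])
  also have "\<dots> = Umat N M v * ?Y"
    using T Y by (simp flip: assoc_mult_mat[OF T(1) Smat_carrier Y])
  finally have "Umat N M v * inv_mat ?S * transpose_mat (U1mat N M v) = Umat N M v * ?Y" .
  then have gamma: "gamma N M v = (1\<^sub>m M @\<^sub>r 0\<^sub>m (N - M) M) - Umat N M v * ?Y"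
    by (simp add: gamma_def)
  show ?thesis
  proof (rule eq_matI)
    fix a k assume "a < dim_row (mat N M (\<lambda>(a,k). householder_prod N ?u M $$ (a,k)))"
      "k < dim_col (mat N M (\<lambda>(a,k). householder_prod N ?u M $$ (a,k)))"
    then have a: "a < N" and k: "k < M" by auto
    have "(1\<^sub>m M @\<^sub>r 0\<^sub>m (N - M) M) $$ (a,k) = (if a = k then 1 else 0)"
      using a k MN by (auto simp: append_rows_def)
    moreover have "(Umat N M v * ?Y) $$ (a,k) = (\<Sum>j<M. ?u j $ a * wy_coeff N ?u M j k)"
      using a k by (simp add: scalar_prod_def lessThan_atLeast0 Umat_def normalized_def)
    ultimately show "gamma N M v $$ (a,k) = mat N M (\<lambda>(a,k). householder_prod N ?u M $$ (a,k)) $$ (a,k)"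
      unfolding gamma using a k MN householder_prod_wy[of a N k ?u M] by (simp add: Umat_def)
  qed (auto simp: gamma_def Umat_def U1mat_def)
qed

lemma leading_columns_in_stiefel:
  assumes Q: "Q \<in> carrier_mat N N" and orth: "transpose_mat Q * Q = 1\<^sub>m N" and "M \<le> N"
  shows "mat N M (\<lambda>(a,k). Q $$ (a,k)) \<in> stiefel N M"
proof -
  let ?G = "mat N M (\<lambda>(a,k). Q $$ (a,k))"
  have "transpose_mat ?G * ?G = 1\<^sub>m M"
  proof (rule eq_matI)
    fix k l assume "k < dim_row (1\<^sub>m M :: real mat)" "l < dim_col (1\<^sub>m M :: real mat)"
    then have k: "k < M" and l: "l < M" by auto
    then have "(transpose_mat ?G * ?G) $$ (k,l) = (transpose_mat Q * Q) $$ (k,l)"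
      using Q \<open>M \<le> N\<close> by (simp add: scalar_prod_def)
    also have "\<dots> = 1\<^sub>m M $$ (k,l)"
      unfolding orth using k l \<open>M \<le> N\<close> by simp
    finally show "(transpose_mat ?G * ?G) $$ (k,l) = 1\<^sub>m M $$ (k,l)" .
  qed auto
  then show ?thesis by (simp add: stiefel_def)
qed

lemma gamma_in_stiefel:
  assumes "M \<le> N" and "valid_tuple N M v"
  shows "gamma N M v \<in> stiefel N M"
  unfolding gamma_eq_leading_columns[OF assms(1)]
  using assms normalized_unit_vector
  by (intro leading_columns_in_stiefel transpose_householder_prod_mult) (auto simp: valid_tuple_def)

section \<open>Surjectivity\<close>

lemma mult_mat_vec_unit_vec:
  assumes "(A :: 'a :: semiring_1 mat) \<in> carrier_mat nr n" "k < n"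
  shows "A *\<^sub>v unit_vec n k = col A k"
  using assms by (intro eq_vecI) (auto simp: carrier_matD)

lemma stiefel_col_inner:
  assumes "\<Omega> \<in> stiefel N M" "i < M" "l < M"
  shows "col \<Omega> i \<bullet> col \<Omega> l = (if i = l then 1 else 0)"
proof -
  have C: "\<Omega> \<in> carrier_mat N M" and E: "transpose_mat \<Omega> * \<Omega> = 1\<^sub>m M"
    using assms(1) by (auto simp: stiefel_def)
  have "col \<Omega> i \<bullet> col \<Omega> l = (transpose_mat \<Omega> * \<Omega>) $$ (i,l)"
    using C assms by simp
  then show ?thesis
    unfolding E using assms by simp
qed

lemma householder_qr_step:
  assumes mM: "m < M" and MN: "M < N" and \<Omega>: "\<Omega> \<in> stiefel N M"
    and u: "\<And>j. j < m \<Longrightarrow> unit_vector N (u j)"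
    and cols: "\<And>k. k < m \<Longrightarrow> col (householder_prod N u m) k = col \<Omega> k"
  shows "\<exists>w. unit_vector N w \<and> (\<forall>k<Suc m. col (householder_prod N (u(m:=w)) (Suc m)) k = col \<Omega> k)"
proof -
  let ?Q = "householder_prod N u m"
  let ?\<omega> = "col \<Omega> m"
  have Q: "?Q \<in> carrier_mat N N" and \<omega>: "?\<omega> \<in> carrier_vec N"
    using \<Omega> by (auto simp: stiefel_def)
  define x where "x = transpose_mat ?Q *\<^sub>v ?\<omega>"
  have x: "x \<in> carrier_vec N"
    unfolding x_def using Q \<omega> by (intro mult_mat_vec_carrier) auto
  have "?Q *\<^sub>v x = (?Q * transpose_mat ?Q) *\<^sub>v ?\<omega>"
    unfolding x_def using assoc_mult_mat_vec[of ?Q N N "transpose_mat ?Q" N ?\<omega>] \<omega> by simp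
  also have "\<dots> = ?\<omega>"
    using \<omega> by (simp add: householder_prod_mult_transpose[OF u])
  finally have Qx: "?Q *\<^sub>v x = ?\<omega>" .
  have "x \<bullet> x = ?\<omega> \<bullet> ?\<omega>"
    using transpose_vec_mult_scalar[OF Q x \<omega>] Qx by (simp add: x_def)
  then have x_unit: "unit_vector N x"
    using stiefel_col_inner[OF \<Omega> mM mM] x by (simp add: unit_vector_def)
  have x0: "x $ i = 0" if "i < m" for i
  proof -
    have "x $ i = col ?Q i \<bullet> ?\<omega>"
      using that mM MN by (simp add: x_def)
    also have "\<dots> = 0"
      using that cols stiefel_col_inner[OF \<Omega>, of i m] mM by simp
    finally show ?thesis .
  qed
  have "Suc m < N"
    using mM MN by simp
  then obtain w where w: "unit_vector N w"
    and H: "\<And>c k. c < N \<Longrightarrow> k \<le> m \<Longrightarrow>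
              householder N w $$ (c,k) = (if k < m then (if c = k then 1 else 0) else x $ c)"
    using householder_maps_unit_vec[OF x_unit _ x0] by blast
  have Q_upd: "householder_prod N (u(m:=w)) m = ?Q"
    by (rule householder_prod_cong) simp
  have "col (householder_prod N (u(m:=w)) (Suc m)) k = col \<Omega> k" if k: "k < Suc m" for k
  proof -
    have "col (householder_prod N (u(m:=w)) (Suc m)) k = ?Q *\<^sub>v col (householder N w) k"
      using k mM MN by (simp add: Q_upd col_mult2[of _ N N _ N])
    also have "\<dots> = col \<Omega> k"
    proof (cases "k < m")
      case True
      have "col (householder N w) k = unit_vec N k"
        using True mM MN H by (intro eq_vecI) auto
      then show ?thesis
        using True mM MN cols mult_mat_vec_unit_vec[OF Q, of k] by simp
    next
      case False
      with k have "k = m" by simp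
      have "col (householder N w) m = x"
        using mM MN H x by (intro eq_vecI) auto
      then show ?thesis
        using \<open>k = m\<close> Qx by simp
    qed
    finally show ?thesis .
  qed
  with w show ?thesis by blast
qed

lemma householder_qr:
  assumes MN: "M < N" and \<Omega>: "\<Omega> \<in> stiefel N M" and "m \<le> M"
  shows "\<exists>u. (\<forall>j<m. unit_vector N (u j)) \<and> (\<forall>k<m. col (householder_prod N u m) k = col \<Omega> k)"
  using \<open>m \<le> M\<close>
proof (induction m)
  case (Suc m)
  then obtain u where u: "\<forall>j<m. unit_vector N (u j)"
    and cols: "\<forall>k<m. col (householder_prod N u m) k = col \<Omega> k"
    by auto
  obtain w where w: "unit_vector N w"
    and cols': "\<forall>k<Suc m. col (householder_prod N (u(m:=w)) (Suc m)) k = col \<Omega> k"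
    using householder_qr_step[OF _ MN \<Omega>, of m u] Suc.prems u cols by auto
  have "\<forall>j<Suc m. unit_vector N ((u(m:=w)) j)"
    using u w by (auto simp: less_Suc_eq)
  with cols' show ?case by blast
qed simp

lemma gamma_surjective:
  assumes MN: "M < N" and \<Omega>: "\<Omega> \<in> stiefel N M"
  shows "\<exists>v. valid_tuple N M v \<and> gamma N M v = \<Omega>"
proof -
  obtain u where u: "\<forall>j<M. unit_vector N (u j)"
    and cols: "\<forall>k<M. col (householder_prod N u M) k = col \<Omega> k"
    using householder_qr[OF MN \<Omega> order_refl] by blast
  have C: "\<Omega> \<in> carrier_mat N M"
    using \<Omega> by (simp add: stiefel_def)
  have valid: "valid_tuple N M u"
    unfolding valid_tuple_def using u unit_vector_nonzero unit_vector_def by blast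
  have "householder_prod N (normalized N u) M = householder_prod N u M"
    by (intro householder_prod_cong normalized_unit_vector_eq) (use u in blast)
  moreover have "mat N M (\<lambda>(a,k). householder_prod N u M $$ (a,k)) = \<Omega>"
  proof (rule eq_matI)
    fix a k assume "a < dim_row \<Omega>" "k < dim_col \<Omega>"
    with C have a: "a < N" and k: "k < M"
      by auto
    have "col (householder_prod N u M) k $ a = col \<Omega> k $ a"
      using cols k by simp
    then show "mat N M (\<lambda>(a,k). householder_prod N u M $$ (a,k)) $$ (a,k) = \<Omega> $$ (a,k)"
      using a k MN C by simp
  qed (use C in auto)
  ultimately have "gamma N M u = \<Omega>"
    using gamma_eq_leading_columns[OF less_imp_le[OF MN], of u] by simp
  with valid show ?thesis by blast
qed

theorem theorem3:
  fixes N M :: nat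
  assumes "0 < M" and "M < N"
  shows "(\<forall>v. valid_tuple N M v \<longrightarrow> invertible_mat (Smat N M v))
    \<and> (\<forall>v. valid_tuple N M v \<longrightarrow> gamma N M v \<in> stiefel N M)
    \<and> (\<forall>\<Omega> \<in> stiefel N M. \<exists>v. valid_tuple N M v \<and> gamma N M v = \<Omega>)"
proof (intro conjI allI impI ballI)
  fix v
  show "invertible_mat (Smat N M v)"
    using inv_mat_left_inverse(1)[OF Smat_carrier] by (simp add: det_Smat)
next
  fix v assume "valid_tuple N M v"
  then show "gamma N M v \<in> stiefel N M"
    using gamma_in_stiefel assms by simp
next
  fix \<Omega> assume "\<Omega> \<in> stiefel N M"
  then show "\<exists>v. valid_tuple N M v \<and> gamma N M v = \<Omega>"
    using gamma_surjective assms by blast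
qed

end
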